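(* Suppose Assumptions 1–6 hold. Then $$R_n(\mathbf w_n^* )-R_n(\tilde{\mathbf w}_n^* )=o\{R_n(\mathbf w_n^* )\},$$ i.e. the optimal model averaging risks over $\mathcal W_n$ and over $\mathcal Q_n$ are asymptotically equivalent. No assumption on $M_n$ or on the decay of $\theta_{n,m}$ is needed.
   Context: Setting. For each sample size $n$ one observes $\mathbf y=\boldsymbol\mu+\boldsymbol\varepsilon\in\mathbb R^n$ with $\boldsymbol\mu=\mathbf X\boldsymbol\beta$, where $\mathbf X=(x_{ij})$ is a nonstochastic $n\times p_n$ matrix with $p_n<n$, $E(\boldsymbol\varepsilon)=\mathbf 0$, $\mathrm{Cov}(\boldsymbol\varepsilon)=\boldsymbol\Omega$ positive definite (all may depend on $n$). Fix integers $0=\nu_0<\nu_1<\cdots<\nu_{q_n}=p_n$. For $m=1,\dots,q_n$, $\mathbf X_m$ is the $n\times\nu_m$ matrix of the first $\nu_m$ columns of $\mathbf X$ (full column rank), $\mathbf P_m=\mathbf X_m(\mathbf X_m^\top\mathbf X_m)^{-1}\mathbf X_m^\top$, $\mathbf P_0=\mathbf 0$. Candidate models are $m\in\{1,\dots,M_n\}$, $2\le M_n\le q_n$. $R_n(m)=E\|\mathbf P_m\mathbf y-\boldsymbol\mu\|^2$; for $\mathbf w\in\mathbb R^{M_n}$, $R_n(\mathbf w)=E\|\sum_{m=1}^{M_n}w_m\mathbf P_m\mathbf y-\boldsymbol\mu\|^2$. $\mathcal W_n=\{\mathbf w\in[0,1]^{M_n}:\sum_m w_m=1\}$ and $\mathcal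 Q_n=[0,1]^{M_n}$. $\mathbf w_n^*$ minimizes $R_n(\mathbf w)$ over $\mathcal W_n$ and $\tilde{\mathbf w}_n^*$ minimizes it over $\mathcal Q_n$; $m_n^{**}$ minimizes $R_n(m)$ over $\{1,\dots,q_n\}$ (all unique). $\theta_{n,m}=\dfrac{n^{-1}\boldsymbol\mu^\top(\mathbf P_m-\mathbf P_{m-1})\boldsymbol\mu}{\mathrm{tr}\{(\mathbf P_m-\mathbf P_{m-1})\boldsymbol\Omega\}}$, $m=1,\dots,q_n$; $d_n=\max\{m:\theta_{n,m}>0\}$. Assumption 1: $\|\boldsymbol\mu\|^2/n=O(1)$. Assumption 2: constants $0<c_1\le c_2<\infty$ with $c_1<\lambda_{\min}(\boldsymbol\Omega)\le\lambda_{\max}(\boldsymbol\Omega)<c_2$. Assumption 3: for each large $n$, $\theta_{n,1}\ge\cdots\ge\theta_{n,q_n}$. Assumption 4: a constant $V\ge1$ with $\max_{1\le m\le d_n}(\nu_m-\nu_{m-1})\le V$ for all large $n$. Assumption 5: for every fixed positive integer $m$ there are $\bar\theta_m>0$, $K_m>0$ such that for all $n\ge K_m$, $m\le d_n$ and $\theta_{n,m}\ge\bar\theta_m$. Assumption 6: for each large $n$ there is $m_n'\in\{1,\dots,d_n-1\}$ with $R_n(m)<R_n(m-1)$ for $2\le m\le m_n'$, $R_n(m)\ge R_n(m-1)$ for $m_n'<m\le d_n$, and $R_n(d_n)>R_n(d_n-1)$. *)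

theory Defs
  imports "HOL-Probability.Probability" "HOL-Library.Landau_Symbols"
    "Jordan_Normal_Form.Gauss_Jordan_Elimination" "Jordan_Normal_Form.Char_Poly"
begin

definition first_cols :: "real mat \<Rightarrow> nat \<Rightarrow> real mat" where
  "first_cols X k = mat (dim_row X) k (\<lambda>(i,j). X $$ (i,j))"

definition full_col_rank :: "real mat \<Rightarrow> bool" where
  "full_col_rank A \<longleftrightarrow>
     (\<forall>v \<in> carrier_vec (dim_col A). A *\<^sub>v v = 0\<^sub>v (dim_row A) \<longrightarrow> v = 0\<^sub>v (dim_col A))"

definition hat_mat :: "real mat \<Rightarrow> real mat" where
  "hat_mat A = A * the (mat_inverse (transpose_mat A * A)) * transpose_mat A"

text \<open>P_m (with P_0 = 0) for design X and column cut points nu.\<close>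
definition proj :: "real mat \<Rightarrow> (nat \<Rightarrow> nat) \<Rightarrow> nat \<Rightarrow> real mat" where
  "proj X nu m = (if m = 0 then 0\<^sub>m (dim_row X) (dim_row X)
                 else hat_mat (first_cols X (nu m)))"

definition sqnorm :: "real vec \<Rightarrow> real" where
  "sqnorm v = (\<Sum>i<dim_vec v. (v $ i)\<^sup>2)"

definition mtrace :: "real mat \<Rightarrow> real" where
  "mtrace A = (\<Sum>i<dim_row A. A $$ (i,i))"

definition risk_mat :: "'a measure \<Rightarrow> ('a \<Rightarrow> real vec) \<Rightarrow> real vec \<Rightarrow> real mat \<Rightarrow> real" where
  "risk_mat M eps mu A = integral\<^sup>L M (\<lambda>\<omega>. sqnorm (A *\<^sub>v (mu + eps \<omega>) - mu))"

definition avg_mat :: "real mat \<Rightarrow> (nat \<Rightarrow> nat) \<Rightarrow> nat \<Rightarrow> (nat \<Rightarrow> real) \<Rightarrow> real mat" where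
  "avg_mat X nu Mn w = mat (dim_row X) (dim_row X)
      (\<lambda>(i,j). \<Sum>m=1..Mn. w m * proj X nu m $$ (i,j))"

definition risk_w :: "'a measure \<Rightarrow> ('a \<Rightarrow> real vec) \<Rightarrow> real mat \<Rightarrow> real vec \<Rightarrow> (nat \<Rightarrow> nat)
     \<Rightarrow> nat \<Rightarrow> (nat \<Rightarrow> real) \<Rightarrow> real" where
  "risk_w M eps X beta nu Mn w = risk_mat M eps (X *\<^sub>v beta) (avg_mat X nu Mn w)"

definition risk_m :: "'a measure \<Rightarrow> ('a \<Rightarrow> real vec) \<Rightarrow> real mat \<Rightarrow> real vec \<Rightarrow> (nat \<Rightarrow> nat)
     \<Rightarrow> nat \<Rightarrow> real" where
  "risk_m M eps X beta nu m = risk_mat M eps (X *\<^sub>v beta) (proj X nu m)"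

definition theta :: "real mat \<Rightarrow> real vec \<Rightarrow> real mat \<Rightarrow> (nat \<Rightarrow> nat) \<Rightarrow> nat \<Rightarrow> real" where
  "theta X beta Om nu m =
     (let mu = X *\<^sub>v beta; D = proj X nu m - proj X nu (m - 1) in
      (scalar_prod mu (D *\<^sub>v mu) / real (dim_row X)) / mtrace (D * Om))"

definition dn :: "real mat \<Rightarrow> real vec \<Rightarrow> real mat \<Rightarrow> (nat \<Rightarrow> nat) \<Rightarrow> nat \<Rightarrow> nat" where
  "dn X beta Om nu q = Max {m \<in> {1..q}. theta X beta Om nu m > 0}"

definition simplex_w :: "nat \<Rightarrow> (nat \<Rightarrow> real) set" where
  "simplex_w Mn = {w. (\<forall>m\<in>{1..Mn}. 0 \<le> w m \<and> w m \<le> 1) \<and> (\<Sum>m=1..Mn. w m) = 1}"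

definition cube_w :: "nat \<Rightarrow> (nat \<Rightarrow> real) set" where
  "cube_w Mn = {w. \<forall>m\<in>{1..Mn}. 0 \<le> w m \<and> w m \<le> 1}"

definition unique_argmin :: "nat \<Rightarrow> ((nat \<Rightarrow> real) \<Rightarrow> real) \<Rightarrow> (nat \<Rightarrow> real) set \<Rightarrow> (nat \<Rightarrow> real) \<Rightarrow> bool" where
  "unique_argmin Mn f S w \<longleftrightarrow> w \<in> S \<and> (\<forall>v\<in>S. f w \<le> f v)
      \<and> (\<forall>v\<in>S. f v = f w \<longrightarrow> (\<forall>m\<in>{1..Mn}. v m = w m))"

end

theory Submission
  imports Defs
begin

text \<open>Write \<open>D\<^sub>k = P\<^sub>k - P\<^sub>k\<^sub>-\<^sub>1\<close> and \<open>W\<^sub>k = \<Sum>\<^sub>m\<^sub>\<ge>\<^sub>k w\<^sub>m\<close>. The \<open>D\<^sub>k\<close> are mutually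
  orthogonal projections summing to \<open>P\<^sub>q\<close>, which fixes \<open>\<mu>\<close>, so summation by parts gives
  \<open>R(w) = \<Sum>\<^sub>k (W\<^sub>k - 1)\<^sup>2 a\<^sub>k + W\<^sub>k\<^sup>2 b\<^sub>k\<close> with \<open>a\<^sub>k = \<parallel>D\<^sub>k \<mu>\<parallel>\<^sup>2\<close> and \<open>b\<^sub>k = tr(D\<^sub>k \<Omega>)\<close>.
  On the simplex \<open>W\<^sub>1 = 1\<close>, so every simplex risk is at least \<open>b\<^sub>1\<close>. Conversely, clipping the
  tail sums of the cube minimiser at \<open>1\<close> and setting \<open>W\<^sub>1 = 1\<close> gives a simplex point that is
  worse only in the first layer, by at most \<open>b\<^sub>1 - min\<^sub>W ((W-1)\<^sup>2 a\<^sub>1 + W\<^sup>2 b\<^sub>1) \<le> b\<^sub>1\<^sup>2 / a\<^sub>1\<close>.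
  Hence the relative gap is at most \<open>b\<^sub>1 / a\<^sub>1 = 1 / (n \<theta>\<^sub>n\<^sub>,\<^sub>1)\<close>, which is \<open>O(1/n)\<close> by
  Assumption 5 with \<open>m = 1\<close>.\<close>

section \<open>Tail weights and the risk of one layer\<close>

lemma sum_atLeast1_telescope:
  fixes a :: "nat \<Rightarrow> 'b::ab_group_add"
  shows "(\<Sum>k=1..q. a k - a (k - 1)) = a q - a 0"
  by (induction q) (auto simp: sum.atLeast1_atMost_eq)

lemma sum_by_parts_tails:
  fixes w a :: "nat \<Rightarrow> real"
  assumes "a 0 = 0" and "M \<le> q"
  shows "(\<Sum>m=1..M. w m * a m) = (\<Sum>k=1..q. (\<Sum>m=k..M. w m) * (a k - a (k - 1)))"
proof -
  have "(\<Sum>m=1..M. w m * a m) = (\<Sum>k=1..M. (\<Sum>m=k..M. w m) * (a k - a (k - 1)))" for M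
  proof (induction M)
    case (Suc M)
    have "(\<Sum>k=1..Suc M. (\<Sum>m=k..Suc M. w m) * (a k - a (k - 1)))
        = (\<Sum>k=1..Suc M. (\<Sum>m=k..M. w m) * (a k - a (k - 1)))
          + w (Suc M) * (\<Sum>k=1..Suc M. a k - a (k - 1))"
      by (simp add: sum_distrib_left sum.distrib[symmetric] algebra_simps)
    also have "(\<Sum>k=1..Suc M. a k - a (k - 1)) = a (Suc M)"
      using sum_atLeast1_telescope[of a "Suc M"] assms(1) by simp
    finally show ?case using Suc by simp
  qed simp
  also have "(\<Sum>k=1..M. (\<Sum>m=k..M. w m) * (a k - a (k - 1)))
      = (\<Sum>k=1..q. (\<Sum>m=k..M. w m) * (a k - a (k - 1)))"
    by (rule sum.mono_neutral_left) (use assms(2) in auto)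
  finally show ?thesis .
qed

definition layer_risk :: "real \<Rightarrow> real \<Rightarrow> real \<Rightarrow> real" where
  "layer_risk a b W = (W - 1)\<^sup>2 * a + W\<^sup>2 * b"

lemma layer_risk_nonneg: "0 \<le> a \<Longrightarrow> 0 \<le> b \<Longrightarrow> 0 \<le> layer_risk a b W"
  unfolding layer_risk_def by simp

lemma layer_risk_one [simp]: "layer_risk a b 1 = b"
  unfolding layer_risk_def by simp

lemma layer_risk_min_one_le:
  assumes "0 \<le> a" "0 \<le> b"
  shows "layer_risk a b (min W 1) \<le> layer_risk a b W"
proof (cases "W \<le> 1")
  case False
  hence "b \<le> W\<^sup>2 * b" using assms by (simp add: mult_le_cancel_right1 one_le_power)
  thus ?thesis using False assms unfolding layer_risk_def by (simp add: add_increasing)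
qed simp

text \<open>The minimum of the parabola is \<open>a b / (a + b)\<close>, which exceeds \<open>b - b\<^sup>2 / a\<close>.\<close>
lemma layer_risk_lower:
  assumes "0 < a" "0 \<le> b"
  shows "b - b\<^sup>2 / a \<le> layer_risk a b W"
proof -
  have "(a + b) * layer_risk a b W - a * b = ((a + b) * W - a)\<^sup>2"
    unfolding layer_risk_def by (simp add: power2_eq_square algebra_simps)
  hence min: "a * b / (a + b) \<le> layer_risk a b W"
    using assms by (simp add: divide_le_eq mult.commute) (smt (verit) zero_le_power2)
  have "(a * b - b * b) * (a + b) \<le> (a * b) * a"
    using assms by (simp add: algebra_simps)
  hence "b - b\<^sup>2 / a \<le> a * b / (a + b)"
    using assms by (simp add: field_simps power2_eq_square)
  with min show ?thesis by linarith
qed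


lemma clipped_tail_weights:
  assumes wt: "wt \<in> cube_w Mn" and Mn: "1 \<le> Mn"
  shows "\<exists>w\<in>simplex_w Mn. \<forall>k\<ge>2. (\<Sum>m=k..Mn. w m) = min (\<Sum>m=k..Mn. wt m) 1"
proof -
  define c where "c k = min (\<Sum>m=k..Mn. wt m) 1" for k
  define w where "w m = (if m = 1 then 1 - c 2 else c m - c (Suc m))" for m
  have wt01: "0 \<le> wt m \<and> wt m \<le> 1" if "m \<in> {1..Mn}" for m
    using wt that unfolding cube_w_def by auto
  have tail_nonneg: "0 \<le> (\<Sum>m=k..Mn. wt m)" if "1 \<le> k" for k
    using wt01 that by (intro sum_nonneg) auto
  have c_beyond: "c (Suc Mn) = 0" unfolding c_def by simp
  have tails: "(\<Sum>m=k..Mn. w m) = c k" if "2 \<le> k" for k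
  proof (cases "k \<le> Suc Mn")
    case True
    have "(\<Sum>m=k..Mn. w m) = - (\<Sum>m=k..Mn. c (Suc m) - c m)"
      unfolding w_def using that by (simp add: sum_negf[symmetric])
    thus ?thesis using sum_Suc_diff[OF True, of c] c_beyond by simp
  next
    case False thus ?thesis unfolding c_def by simp
  qed
  have "(\<Sum>m=1..Mn. w m) = w 1 + (\<Sum>m=2..Mn. w m)"
    using Mn by (simp add: sum.atLeast_Suc_atMost numeral_2_eq_2)
  hence total: "(\<Sum>m=1..Mn. w m) = 1" using tails[of 2] unfolding w_def by simp
  have "0 \<le> w m \<and> w m \<le> 1" if m: "m \<in> {1..Mn}" for m
  proof (cases "m = 1")
    case True thus ?thesis using tail_nonneg[of 2] unfolding w_def c_def by simp
  next
    case False
    have "(\<Sum>m=m..Mn. wt m) = wt m + (\<Sum>m=Suc m..Mn. wt m)"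
      using m by (simp add: sum.atLeast_Suc_atMost)
    thus ?thesis using False wt01[OF m] unfolding w_def c_def by auto
  qed
  hence "w \<in> simplex_w Mn" using total unfolding simplex_w_def by blast
  thus ?thesis using tails unfolding c_def by blast
qed

lemma simplex_cube_risk_gap:
  fixes a b :: "nat \<Rightarrow> real" and R :: "(nat \<Rightarrow> real) \<Rightarrow> real"
  assumes R: "\<And>w. R w = (\<Sum>k=1..q. layer_risk (a k) (b k) (\<Sum>m=k..Mn. w m))"
    and a: "\<And>k. k \<in> {1..q} \<Longrightarrow> 0 \<le> a k" and b: "\<And>k. k \<in> {1..q} \<Longrightarrow> 0 \<le> b k"
    and a1: "0 < a 1"
    and Mn: "1 \<le> Mn" "Mn \<le> q"
    and ws: "ws \<in> simplex_w Mn" "\<forall>v\<in>simplex_w Mn. R ws \<le> R v"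
    and wt: "wt \<in> cube_w Mn" "\<forall>v\<in>cube_w Mn. R wt \<le> R v"
  shows "0 \<le> R ws - R wt" and "R ws - R wt \<le> (b 1)\<^sup>2 / a 1" and "b 1 \<le> R ws"
proof -
  have R_split: "R w = layer_risk (a 1) (b 1) (\<Sum>m=1..Mn. w m)
      + (\<Sum>k=2..q. layer_risk (a k) (b k) (\<Sum>m=k..Mn. w m))" for w
    unfolding R using Mn by (simp add: sum.atLeast_Suc_atMost numeral_2_eq_2)
  have "simplex_w Mn \<subseteq> cube_w Mn" unfolding simplex_w_def cube_w_def by auto
  thus "0 \<le> R ws - R wt" using wt(2) ws(1) by auto
  have "(\<Sum>m=1..Mn. ws m) = 1" using ws(1) unfolding simplex_w_def by auto
  moreover have "0 \<le> (\<Sum>k=2..q. layer_risk (a k) (b k) (\<Sum>m=k..Mn. ws m))"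
    using a b by (intro sum_nonneg layer_risk_nonneg) auto
  ultimately show "b 1 \<le> R ws" using R_split[of ws] by simp
  obtain w where w: "w \<in> simplex_w Mn"
    and w_tails: "\<And>k. 2 \<le> k \<Longrightarrow> (\<Sum>m=k..Mn. w m) = min (\<Sum>m=k..Mn. wt m) 1"
    using clipped_tail_weights[OF wt(1) Mn(1)] by blast
  have "(\<Sum>m=1..Mn. w m) = 1" using w unfolding simplex_w_def by auto
  hence "R ws \<le> b 1 + (\<Sum>k=2..q. layer_risk (a k) (b k) (min (\<Sum>m=k..Mn. wt m) 1))"
    using ws(2) w R_split[of w] w_tails by fastforce
  also have "\<dots> \<le> b 1 + (\<Sum>k=2..q. layer_risk (a k) (b k) (\<Sum>m=k..Mn. wt m))"
    using a b by (intro add_left_mono sum_mono layer_risk_min_one_le) auto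
  also have "b 1 \<le> layer_risk (a 1) (b 1) (\<Sum>m=1..Mn. wt m) + (b 1)\<^sup>2 / a 1"
    using layer_risk_lower[OF a1, of "b 1" "\<Sum>m=1..Mn. wt m"] b[of 1] Mn by simp
  finally show "R ws - R wt \<le> (b 1)\<^sup>2 / a 1" using R_split[of wt] by simp
qed

section \<open>Second moments of linear forms in the noise\<close>

lemma integrable_mult_of_square_integrable:
  fixes f g :: "'a \<Rightarrow> real"
  assumes "f \<in> borel_measurable M" "g \<in> borel_measurable M"
    and "integrable M (\<lambda>x. (f x)\<^sup>2)" "integrable M (\<lambda>x. (g x)\<^sup>2)"
  shows "integrable M (\<lambda>x. f x * g x)"
proof (rule Bochner_Integration.integrable_bound)
  show "integrable M (\<lambda>x. (f x)\<^sup>2 + (g x)\<^sup>2)" using assms by simp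
  have "\<bar>f x * g x\<bar> \<le> (f x)\<^sup>2 + (g x)\<^sup>2" for x
  proof -
    have "2 * (\<bar>f x\<bar> * \<bar>g x\<bar>) \<le> (f x)\<^sup>2 + (g x)\<^sup>2"
      using sum_squares_bound[of "\<bar>f x\<bar>" "\<bar>g x\<bar>"] by (simp add: mult.assoc)
    moreover have "0 \<le> \<bar>f x\<bar> * \<bar>g x\<bar>" by simp
    ultimately show ?thesis unfolding abs_mult by linarith
  qed
  thus "AE x in M. norm (f x * g x) \<le> norm ((f x)\<^sup>2 + (g x)\<^sup>2)" by simp
qed (use assms in auto)

lemma linear_form_moments:
  fixes e :: "'a \<Rightarrow> nat \<Rightarrow> real" and c :: "nat \<Rightarrow> real"
  assumes "prob_space M"
    and meas: "\<And>j. j < n \<Longrightarrow> (\<lambda>x. e x j) \<in> borel_measurable M"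
    and sq: "\<And>j. j < n \<Longrightarrow> integrable M (\<lambda>x. (e x j)\<^sup>2)"
    and mean: "\<And>j. j < n \<Longrightarrow> integral\<^sup>L M (\<lambda>x. e x j) = 0"
    and cov: "\<And>i j. i < n \<Longrightarrow> j < n \<Longrightarrow> integral\<^sup>L M (\<lambda>x. e x i * e x j) = \<Omega> i j"
  shows "integrable M (\<lambda>x. \<Sum>j<n. c j * e x j)"
    and "integral\<^sup>L M (\<lambda>x. \<Sum>j<n. c j * e x j) = 0"
    and "integrable M (\<lambda>x. (\<Sum>j<n. c j * e x j)\<^sup>2)"
    and "integral\<^sup>L M (\<lambda>x. (\<Sum>j<n. c j * e x j)\<^sup>2) = (\<Sum>j<n. \<Sum>l<n. c j * c l * \<Omega> j l)"
proof -
  interpret prob_space M by fact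
  have int: "integrable M (\<lambda>x. e x j)" if "j < n" for j
    using square_integrable_imp_integrable[OF meas[OF that] sq[OF that]] .
  have int2: "integrable M (\<lambda>x. c j * c l * (e x j * e x l))" if "j < n" "l < n" for j l
    using that by (intro integrable_mult_right integrable_mult_of_square_integrable meas sq)
  have square: "(\<Sum>j<n. c j * e x j)\<^sup>2 = (\<Sum>j<n. \<Sum>l<n. c j * c l * (e x j * e x l))" for x
    by (simp add: power2_eq_square sum_product algebra_simps)
  show "integrable M (\<lambda>x. \<Sum>j<n. c j * e x j)" using int by auto
  show "integral\<^sup>L M (\<lambda>x. \<Sum>j<n. c j * e x j) = 0" using int mean by (simp add: integral_sum)
  show "integrable M (\<lambda>x. (\<Sum>j<n. c j * e x j)\<^sup>2)"
    unfolding square by (intro Bochner_Integration.integrable_sum int2) auto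
  show "integral\<^sup>L M (\<lambda>x. (\<Sum>j<n. c j * e x j)\<^sup>2) = (\<Sum>j<n. \<Sum>l<n. c j * c l * \<Omega> j l)"
  proof -
    have "integral\<^sup>L M (\<lambda>x. \<Sum>j<n. \<Sum>l<n. c j * c l * (e x j * e x l))
        = (\<Sum>j<n. \<Sum>l<n. integral\<^sup>L M (\<lambda>x. c j * c l * (e x j * e x l)))"
      using int2 by (subst Bochner_Integration.integral_sum,
          fastforce intro: Bochner_Integration.integrable_sum)
        (intro sum.cong refl Bochner_Integration.integral_sum, auto)
    thus ?thesis unfolding square using cov by simp
  qed
qed

section \<open>Hat matrices and nested projections\<close>

lemma mult_mat_vec_entry:
  fixes A :: "real mat"
  assumes "A \<in> carrier_mat n n" "v \<in> carrier_vec n" "i < n"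
  shows "(A *\<^sub>v v) $ i = (\<Sum>j<n. A $$ (i,j) * v $ j)"
  using assms by (simp add: scalar_prod_def atLeast0LessThan)

lemma sqnorm_mult_mat_vec:
  fixes A :: "real mat"
  assumes "A \<in> carrier_mat n n" "v \<in> carrier_vec n"
  shows "sqnorm (A *\<^sub>v v) = (\<Sum>i<n. (\<Sum>j<n. A $$ (i,j) * v $ j)\<^sup>2)"
  using assms unfolding sqnorm_def
  by (intro sum.cong) (auto simp del: index_mult_mat_vec simp: mult_mat_vec_entry)

lemma gram_mat_inverse:
  fixes A :: "real mat"
  assumes A: "A \<in> carrier_mat n k" and rank: "full_col_rank A"
  obtains B where "mat_inverse (transpose_mat A * A) = Some B" and "B \<in> carrier_mat k k"
    and "B * (transpose_mat A * A) = 1\<^sub>m k" and "transpose_mat B = B"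
proof -
  define G where "G = transpose_mat A * A"
  have G: "G \<in> carrier_mat k k" using A unfolding G_def by auto
  have "v = 0\<^sub>v k" if v: "v \<in> carrier_vec k" and Gv: "G *\<^sub>v v = 0\<^sub>v k" for v
  proof -
    have Av: "A *\<^sub>v v \<in> carrier_vec n" using A v by auto
    have "(A *\<^sub>v v) \<bullet> (A *\<^sub>v v) = (G *\<^sub>v v) \<bullet> v"
      using transpose_vec_mult_scalar[OF A v Av] A v unfolding G_def by simp
    hence "(A *\<^sub>v v) \<bullet>c (A *\<^sub>v v) = 0" using Gv v by simp
    hence "A *\<^sub>v v = 0\<^sub>v n" using conjugate_square_eq_0_vec[OF Av] by simp
    thus ?thesis using rank A v unfolding full_col_rank_def by auto
  qed
  hence "det G \<noteq> 0" using det_0_iff_vec_prod_zero_field[OF G] by auto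
  hence "G \<in> Units (ring_mat TYPE(real) k ())" by (rule det_non_zero_imp_unit[OF G])
  then obtain B where inv: "mat_inverse G = Some B"
    using mat_inverse(1)[OF G, of "()"] by (cases "mat_inverse G") auto
  from mat_inverse(2)[OF G inv] have GB: "G * B = 1\<^sub>m k" and BG: "B * G = 1\<^sub>m k"
    and B: "B \<in> carrier_mat k k" by auto
  have "transpose_mat B * G = 1\<^sub>m k"
    using transpose_mult[OF G B] GB A unfolding G_def by (simp add: transpose_mult[of _ k n _ k])
  hence "transpose_mat B * G * B = B" using B by simp
  hence "transpose_mat B = B" using GB B G by (simp add: assoc_mult_mat[of _ k k _ k _ k])
  thus thesis using that inv B BG unfolding G_def by blast
qed

lemma hat_mat_facts:
  fixes A :: "real mat"
  assumes A: "A \<in> carrier_mat n k" and rank: "full_col_rank A"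
  shows "hat_mat A \<in> carrier_mat n n" and "hat_mat A * A = A"
    and "transpose_mat (hat_mat A) = hat_mat A"
    and "\<exists>B. B \<in> carrier_mat k k \<and> hat_mat A = A * B * transpose_mat A"
proof -
  obtain B where inv: "mat_inverse (transpose_mat A * A) = Some B" and B: "B \<in> carrier_mat k k"
    and BG: "B * (transpose_mat A * A) = 1\<^sub>m k" and BT: "transpose_mat B = B"
    using gram_mat_inverse[OF A rank] .
  have H: "hat_mat A = A * B * transpose_mat A" unfolding hat_mat_def inv by simp
  thus "\<exists>B. B \<in> carrier_mat k k \<and> hat_mat A = A * B * transpose_mat A" using B by blast
  show "hat_mat A \<in> carrier_mat n n" unfolding H using A B by auto
  have AB: "A * B \<in> carrier_mat n k" using A B by simp
  have "hat_mat A * A = A * B * (transpose_mat A * A)"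
    unfolding H using assoc_mult_mat[OF AB _ A, of "transpose_mat A"] A by simp
  also have "\<dots> = A * (B * (transpose_mat A * A))"
    using assoc_mult_mat[OF A B, of "transpose_mat A * A" k] A by simp
  also have "\<dots> = A" using A BG by simp
  finally show "hat_mat A * A = A" .
  have "transpose_mat (hat_mat A) = transpose_mat (transpose_mat A) * transpose_mat (A * B)"
    unfolding H by (rule transpose_mult) (use A B in auto)
  also have "\<dots> = hat_mat A" unfolding H
    using A B BT transpose_mult[OF A B] by (simp add: assoc_mult_mat[of A n k B k "transpose_mat A" n])
  finally show "transpose_mat (hat_mat A) = hat_mat A" .
qed

lemma first_cols_carrier: "X \<in> carrier_mat n p \<Longrightarrow> first_cols X k \<in> carrier_mat n k"
  unfolding first_cols_def by auto

lemma first_cols_all: "X \<in> carrier_mat n p \<Longrightarrow> first_cols X p = X"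
  unfolding first_cols_def by (auto intro!: eq_matI)

lemma fixes_first_cols_mono:
  fixes X H :: "real mat"
  assumes X: "X \<in> carrier_mat n p" and H: "H \<in> carrier_mat n n" and jk: "j \<le> k"
    and fix_k: "H * first_cols X k = first_cols X k"
  shows "H * first_cols X j = first_cols X j"
proof (rule eq_matI)
  fix i l assume i: "i < dim_row (first_cols X j)" and l: "l < dim_col (first_cols X j)"
  have Xj: "first_cols X j \<in> carrier_mat n j" and Xk: "first_cols X k \<in> carrier_mat n k"
    using first_cols_carrier[OF X] by auto
  have lk: "l < k" using l jk Xj by auto
  have col: "col (first_cols X j) l = col (first_cols X k) l"
    using l lk X unfolding first_cols_def by (auto intro!: eq_vecI)
  have "(H * first_cols X j) $$ (i,l) = (H * first_cols X k) $$ (i,l)"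
    using i l lk H Xj Xk by (simp add: col)
  also have "\<dots> = first_cols X j $$ (i,l)"
    unfolding fix_k using i l lk X unfolding first_cols_def by auto
  finally show "(H * first_cols X j) $$ (i,l) = first_cols X j $$ (i,l)" .
qed (use H first_cols_carrier[OF X, of j] in auto)


section \<open>Orthogonal layers, in coordinates\<close>

lemma sum_mult_matvec_swap:
  fixes d1 d2 c :: "nat \<Rightarrow> nat \<Rightarrow> real" and x y :: "nat \<Rightarrow> real"
  assumes sym: "\<And>i j. i < n \<Longrightarrow> j < n \<Longrightarrow> d1 i j = d1 j i"
    and prod: "\<And>i m. i < n \<Longrightarrow> m < n \<Longrightarrow> (\<Sum>l<n. d1 i l * d2 l m) = c i m"
  shows "(\<Sum>i<n. (\<Sum>j<n. d1 i j * x j) * (\<Sum>l<n. d2 i l * y l))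
       = (\<Sum>j<n. \<Sum>l<n. x j * y l * c j l)"
proof -
  have "(\<Sum>i<n. (\<Sum>j<n. d1 i j * x j) * (\<Sum>l<n. d2 i l * y l))
      = (\<Sum>i<n. \<Sum>j<n. \<Sum>l<n. x j * y l * (d1 i j * d2 i l))"
    unfolding sum_product by (intro sum.cong refl) (simp only: mult_ac)
  also have "\<dots> = (\<Sum>j<n. \<Sum>l<n. \<Sum>i<n. x j * y l * (d1 i j * d2 i l))"
    by (subst sum.swap) (intro sum.cong refl sum.swap)
  also have "\<dots> = (\<Sum>j<n. \<Sum>l<n. x j * y l * (\<Sum>i<n. d1 j i * d2 i l))"
    by (intro sum.cong refl) (simp add: sum_distrib_left sym)
  finally show ?thesis by (simp add: prod)
qed

lemma sum_sq_orthogonal_sum: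
  fixes d :: "nat \<Rightarrow> nat \<Rightarrow> nat \<Rightarrow> real"
  assumes "finite K"
    and sym: "\<And>k i j. k \<in> K \<Longrightarrow> i < n \<Longrightarrow> j < n \<Longrightarrow> d k i j = d k j i"
    and orth: "\<And>j k i m. j \<in> K \<Longrightarrow> k \<in> K \<Longrightarrow> j \<noteq> k \<Longrightarrow> i < n \<Longrightarrow> m < n \<Longrightarrow>
        (\<Sum>l<n. d j i l * d k l m) = 0"
  shows "(\<Sum>i<n. (\<Sum>k\<in>K. \<Sum>j<n. d k i j * z k j)\<^sup>2) = (\<Sum>k\<in>K. \<Sum>i<n. (\<Sum>j<n. d k i j * z k j)\<^sup>2)"
proof -
  define r where "r k i = (\<Sum>j<n. d k i j * z k j)" for k i
  have cross: "(\<Sum>i<n. r k i * r k' i) = (if k' = k then \<Sum>i<n. (r k i)\<^sup>2 else 0)"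
    if "k \<in> K" "k' \<in> K" for k k'
    unfolding r_def using that sym orth
    by (auto simp: power2_eq_square sum_mult_matvec_swap[where c="\<lambda>_ _. 0"])
  have "(\<Sum>i<n. (\<Sum>k\<in>K. r k i)\<^sup>2) = (\<Sum>k\<in>K. \<Sum>k'\<in>K. \<Sum>i<n. r k i * r k' i)"
    by (simp add: power2_eq_square sum_product, subst sum.swap, intro sum.cong refl sum.swap)
  also have "\<dots> = (\<Sum>k\<in>K. \<Sum>i<n. (r k i)\<^sup>2)"
    using cross \<open>finite K\<close> by (simp add: sum.delta cong: sum.cong)
  finally show ?thesis unfolding r_def .
qed

lemma nested_increment_mult:
  fixes P :: "nat \<Rightarrow> nat \<Rightarrow> nat \<Rightarrow> real"
  assumes prod: "\<And>j k i m. j \<le> q \<Longrightarrow> k \<le> q \<Longrightarrow> i < n \<Longrightarrow> m < n \<Longrightarrow>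
        (\<Sum>l<n. P j i l * P k l m) = P (min j k) i m"
    and j: "j \<in> {1..q}" and k: "k \<in> {1..q}" and i: "i < n" and m: "m < n"
  shows "(\<Sum>l<n. (P j i l - P (j - 1) i l) * (P k l m - P (k - 1) l m))
       = (if j = k then P k i m - P (k - 1) i m else 0)"
proof -
  have "(\<Sum>l<n. (P j i l - P (j - 1) i l) * (P k l m - P (k - 1) l m))
     = (\<Sum>l<n. P j i l * P k l m) - (\<Sum>l<n. P j i l * P (k - 1) l m)
       - (\<Sum>l<n. P (j - 1) i l * P k l m) + (\<Sum>l<n. P (j - 1) i l * P (k - 1) l m)"
    by (simp add: algebra_simps sum_subtractf sum.distrib)
  also have "\<dots> = P (min j k) i m - P (min j (k - 1)) i m - P (min (j - 1) k) i m
      + P (min (j - 1) (k - 1)) i m"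
    using j k i m prod[of j k i m] prod[of j "k - 1" i m] prod[of "j - 1" k i m]
      prod[of "j - 1" "k - 1" i m] by (simp add: le_diff_conv)
  also have "\<dots> = (if j = k then P k i m - P (k - 1) i m else 0)"
  proof (cases j k rule: linorder_cases)
    case less
    hence "min j k = j" "min j (k - 1) = j" "min (j - 1) k = j - 1" "min (j - 1) (k - 1) = j - 1"
      by auto
    thus ?thesis using less by simp
  next
    case greater
    hence "min j k = k" "min j (k - 1) = k - 1" "min (j - 1) k = k" "min (j - 1) (k - 1) = k - 1"
      by auto
    thus ?thesis using greater by simp
  qed simp
  finally show ?thesis .
qed

lemma averaged_error_layers:
  fixes P :: "nat \<Rightarrow> nat \<Rightarrow> nat \<Rightarrow> real" and w mu y :: "nat \<Rightarrow> real"
  assumes P0: "\<And>i j. i < n \<Longrightarrow> j < n \<Longrightarrow> P 0 i j = 0"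
    and sym: "\<And>k i j. k \<le> q \<Longrightarrow> i < n \<Longrightarrow> j < n \<Longrightarrow> P k i j = P k j i"
    and prod: "\<And>j k i m. j \<le> q \<Longrightarrow> k \<le> q \<Longrightarrow> i < n \<Longrightarrow> m < n \<Longrightarrow>
        (\<Sum>l<n. P j i l * P k l m) = P (min j k) i m"
    and fixes_mu: "\<And>i. i < n \<Longrightarrow> (\<Sum>l<n. P q i l * mu l) = mu i"
    and "M \<le> q"
  shows "(\<Sum>i<n. ((\<Sum>j<n. (\<Sum>m=1..M. w m * P m i j) * y j) - mu i)\<^sup>2)
    = (\<Sum>k=1..q. \<Sum>i<n. (\<Sum>j<n. (P k i j - P (k - 1) i j) * ((\<Sum>m=k..M. w m) * y j - mu j))\<^sup>2)"
proof -
  define d where "d k i j = P k i j - P (k - 1) i j" for k i j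
  define W where "W k = (\<Sum>m=k..M. w m)" for k
  have layers: "(\<Sum>j<n. (\<Sum>m=1..M. w m * P m i j) * y j) - mu i
      = (\<Sum>k=1..q. \<Sum>j<n. d k i j * (W k * y j - mu j))" if i: "i < n" for i
  proof -
    have "(\<Sum>m=1..M. w m * P m i j) = (\<Sum>k=1..q. W k * d k i j)" if "j < n" for j
      unfolding W_def d_def using sum_by_parts_tails[of "\<lambda>m. P m i j"] P0 i that \<open>M \<le> q\<close>
      by simp
    moreover have "mu i = (\<Sum>l<n. (\<Sum>k=1..q. d k i l) * mu l)"
    proof -
      have "(\<Sum>k=1..q. d k i l) = P q i l" if "l < n" for l
        using sum_atLeast1_telescope[of "\<lambda>k. P k i l" q] P0[OF i that] unfolding d_def by simp
      thus ?thesis using fixes_mu[OF i] by simp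
    qed
    ultimately have "(\<Sum>j<n. (\<Sum>m=1..M. w m * P m i j) * y j) - mu i
        = (\<Sum>j<n. (\<Sum>k=1..q. W k * d k i j) * y j - (\<Sum>k=1..q. d k i j) * mu j)"
      by (simp add: sum_subtractf)
    also have "\<dots> = (\<Sum>j<n. \<Sum>k=1..q. d k i j * (W k * y j - mu j))"
      by (simp add: sum_subtractf[symmetric] sum_distrib_left sum_distrib_right algebra_simps)
    also have "\<dots> = (\<Sum>k=1..q. \<Sum>j<n. d k i j * (W k * y j - mu j))"
      by (rule sum.swap)
    finally show ?thesis .
  qed
  have "(\<Sum>i<n. (\<Sum>k\<in>{1..q}. \<Sum>j<n. d k i j * (W k * y j - mu j))\<^sup>2)
      = (\<Sum>k\<in>{1..q}. \<Sum>i<n. (\<Sum>j<n. d k i j * (W k * y j - mu j))\<^sup>2)"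
  proof (rule sum_sq_orthogonal_sum)
    show "d k i j = d k j i" if "k \<in> {1..q}" "i < n" "j < n" for k i j
      unfolding d_def using sym[of k i j] sym[of "k - 1" i j] that by auto
    show "(\<Sum>l<n. d j i l * d k l m) = 0"
      if "j \<in> {1..q}" "k \<in> {1..q}" "j \<noteq> k" "i < n" "m < n" for j k i m
      unfolding d_def using nested_increment_mult[OF prod] that by simp
  qed simp
  thus ?thesis using layers unfolding d_def W_def by simp
qed


definition proj_incr :: "real mat \<Rightarrow> (nat \<Rightarrow> nat) \<Rightarrow> nat \<Rightarrow> real mat" where
  "proj_incr X nu k = proj X nu k - proj X nu (k - 1)"

locale nested_design =
  fixes X :: "real mat" and n p q :: nat and nu :: "nat \<Rightarrow> nat"
  assumes X_carrier: "X \<in> carrier_mat n p"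
    and nu_0: "nu 0 = 0" and nu_strict: "\<forall>m<q. nu m < nu (Suc m)" and nu_q: "nu q = p"
    and full_rank: "\<forall>m\<in>{1..q}. full_col_rank (first_cols X (nu m))"
begin

lemma dim_row_X [simp]: "dim_row X = n"
  using X_carrier by simp

lemma nu_mono:
  assumes "j \<le> k" "k \<le> q"
  shows "nu j \<le> nu k"
  using assms(1)
proof (induction k rule: dec_induct)
  case (step m)
  hence "nu m < nu (Suc m)" using assms(2) nu_strict by simp
  thus ?case using step.IH by simp
qed simp

lemma hat_first_cols:
  assumes "k \<in> {1..q}"
  shows "hat_mat (first_cols X (nu k)) \<in> carrier_mat n n"
    and "hat_mat (first_cols X (nu k)) * first_cols X (nu k) = first_cols X (nu k)"
    and "transpose_mat (hat_mat (first_cols X (nu k))) = hat_mat (first_cols X (nu k))"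
    and "\<exists>B. B \<in> carrier_mat (nu k) (nu k) \<and> hat_mat (first_cols X (nu k)) =
        first_cols X (nu k) * B * transpose_mat (first_cols X (nu k))"
  using hat_mat_facts[OF first_cols_carrier[OF X_carrier] full_rank[rule_format, OF assms]]
  by auto

lemma proj_carrier: "k \<le> q \<Longrightarrow> proj X nu k \<in> carrier_mat n n"
  using hat_first_cols(1)[of k] unfolding proj_def by auto

lemma proj_symmetric: "k \<le> q \<Longrightarrow> transpose_mat (proj X nu k) = proj X nu k"
  using hat_first_cols(3)[of k] unfolding proj_def by auto

lemma proj_absorb:
  assumes jk: "j \<le> k" and kq: "k \<le> q"
  shows "proj X nu k * proj X nu j = proj X nu j"
proof (cases "j = 0")
  case True thus ?thesis using proj_carrier[OF kq] unfolding proj_def by simp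
next
  case False
  hence j: "j \<in> {1..q}" and k: "k \<in> {1..q}" using jk kq by auto
  let ?H = "hat_mat (first_cols X (nu k))" and ?A = "first_cols X (nu j)"
  have H: "?H \<in> carrier_mat n n" and A: "?A \<in> carrier_mat n (nu j)"
    using hat_first_cols(1)[OF k] first_cols_carrier[OF X_carrier] by auto
  have HA: "?H * ?A = ?A"
    using fixes_first_cols_mono[OF X_carrier H nu_mono[OF jk kq] hat_first_cols(2)[OF k]] .
  obtain B where B: "B \<in> carrier_mat (nu j) (nu j)"
    and Hj: "hat_mat ?A = ?A * B * transpose_mat ?A"
    using hat_first_cols(4)[OF j] by blast
  have T: "transpose_mat ?A \<in> carrier_mat (nu j) n" using A by simp
  have "?H * (?A * B * transpose_mat ?A) = ?H * ?A * (B * transpose_mat ?A)"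
    using assoc_mult_mat[OF A B T] assoc_mult_mat[OF H A mult_carrier_mat[OF B T]] by simp
  also have "\<dots> = ?A * B * transpose_mat ?A"
    unfolding HA using assoc_mult_mat[OF A B T] by simp
  finally show ?thesis unfolding proj_def using False jk Hj by auto
qed

lemma proj_mult:
  assumes jq: "j \<le> q" and kq: "k \<le> q"
  shows "proj X nu j * proj X nu k = proj X nu (min j k)"
proof (cases "j \<le> k")
  case True
  have "proj X nu j * proj X nu k = transpose_mat (proj X nu k * proj X nu j)"
    using transpose_mult[OF proj_carrier[OF kq] proj_carrier[OF jq]] proj_symmetric jq kq by simp
  thus ?thesis using proj_absorb[OF True kq] proj_symmetric[OF jq] True by simp
next
  case False
  thus ?thesis using proj_absorb[of k j] jq by simp
qed

lemma proj_top_fixes_design: "proj X nu q * X = X"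
proof (cases "q = 0")
  case True
  hence "p = 0" using nu_q nu_0 by simp
  thus ?thesis using X_carrier True unfolding proj_def by (auto intro!: eq_matI)
next
  case False
  thus ?thesis using hat_first_cols(2)[of q] first_cols_all[OF X_carrier]
    unfolding proj_def nu_q by simp
qed

end

context nested_design
begin

lemma proj_entry_0: "i < n \<Longrightarrow> j < n \<Longrightarrow> proj X nu 0 $$ (i,j) = 0"
  unfolding proj_def by simp

lemma proj_entry_symmetric:
  assumes "k \<le> q" "i < n" "j < n"
  shows "proj X nu k $$ (i,j) = proj X nu k $$ (j,i)"
proof -
  have "transpose_mat (proj X nu k) $$ (j,i) = proj X nu k $$ (i,j)"
    using proj_carrier[OF assms(1)] assms by simp
  thus ?thesis using proj_symmetric[OF assms(1)] by simp
qed

lemma proj_entry_mult: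
  assumes "j \<le> q" "k \<le> q" "i < n" "m < n"
  shows "(\<Sum>l<n. proj X nu j $$ (i,l) * proj X nu k $$ (l,m)) = proj X nu (min j k) $$ (i,m)"
  using proj_mult[OF assms(1,2), symmetric] proj_carrier[OF assms(1)] proj_carrier[OF assms(2)] assms
  by (simp add: scalar_prod_def atLeast0LessThan)

lemma proj_top_fixes_mean:
  assumes beta: "beta \<in> carrier_vec p" and i: "i < n"
  shows "(\<Sum>l<n. proj X nu q $$ (i,l) * (X *\<^sub>v beta) $ l) = (X *\<^sub>v beta) $ i"
proof -
  have "proj X nu q *\<^sub>v (X *\<^sub>v beta) = X *\<^sub>v beta"
    using proj_top_fixes_design proj_carrier[of q] X_carrier beta
    by (metis assoc_mult_mat_vec order_refl)
  thus ?thesis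
    using mult_mat_vec_entry[OF proj_carrier[of q] _ i, of "X *\<^sub>v beta"] X_carrier beta by simp
qed

lemma proj_incr_carrier: "k \<le> q \<Longrightarrow> proj_incr X nu k \<in> carrier_mat n n"
  unfolding proj_incr_def using proj_carrier[of k] proj_carrier[of "k - 1"] by fastforce

lemma proj_incr_entry:
  "k \<le> q \<Longrightarrow> i < n \<Longrightarrow> j < n \<Longrightarrow>
    proj_incr X nu k $$ (i,j) = proj X nu k $$ (i,j) - proj X nu (k - 1) $$ (i,j)"
  unfolding proj_incr_def using proj_carrier[of k] proj_carrier[of "k - 1"] by fastforce

lemma proj_incr_entry_symmetric:
  "k \<le> q \<Longrightarrow> i < n \<Longrightarrow> j < n \<Longrightarrow> proj_incr X nu k $$ (i,j) = proj_incr X nu k $$ (j,i)"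
  using proj_entry_symmetric[of k] proj_entry_symmetric[of "k - 1"] by (simp add: proj_incr_entry)

lemma proj_incr_entry_idem:
  assumes "k \<in> {1..q}" "i < n" "m < n"
  shows "(\<Sum>l<n. proj_incr X nu k $$ (i,l) * proj_incr X nu k $$ (l,m)) = proj_incr X nu k $$ (i,m)"
proof -
  have "(\<Sum>l<n. proj_incr X nu k $$ (i,l) * proj_incr X nu k $$ (l,m))
    = (\<Sum>l<n. (proj X nu k $$ (i,l) - proj X nu (k - 1) $$ (i,l))
              * (proj X nu k $$ (l,m) - proj X nu (k - 1) $$ (l,m)))"
    using assms by (intro sum.cong refl) (simp add: proj_incr_entry)
  thus ?thesis
    using nested_increment_mult[of q n "\<lambda>k i j. proj X nu k $$ (i,j)",
        OF proj_entry_mult assms(1,1,2,3)] assms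
    by (simp add: proj_incr_entry)
qed

lemma scalar_prod_proj_incr:
  assumes k: "k \<in> {1..q}" and v: "v \<in> carrier_vec n"
  shows "v \<bullet> (proj_incr X nu k *\<^sub>v v) = sqnorm (proj_incr X nu k *\<^sub>v v)"
proof -
  let ?d = "\<lambda>i j. proj_incr X nu k $$ (i,j)"
  have Dk: "proj_incr X nu k \<in> carrier_mat n n" using k proj_incr_carrier by simp
  have "v \<bullet> (proj_incr X nu k *\<^sub>v v) = (\<Sum>i<n. \<Sum>j<n. v $ i * v $ j * ?d i j)"
    using v Dk by (simp add: scalar_prod_def atLeast0LessThan mult_mat_vec_entry sum_distrib_left mult_ac)
  also have "\<dots> = (\<Sum>i<n. (\<Sum>j<n. ?d i j * v $ j) * (\<Sum>l<n. ?d i l * v $ l))"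
    using k by (intro sum_mult_matvec_swap[symmetric] proj_incr_entry_symmetric proj_incr_entry_idem) auto
  finally show ?thesis using sqnorm_mult_mat_vec[OF Dk v] by (simp add: power2_eq_square)
qed

lemma theta_eq:
  assumes "beta \<in> carrier_vec p" "k \<in> {1..q}"
  shows "theta X beta Om nu k
    = (sqnorm (proj_incr X nu k *\<^sub>v (X *\<^sub>v beta)) / real n) / mtrace (proj_incr X nu k * Om)"
  using scalar_prod_proj_incr[OF assms(2), of "X *\<^sub>v beta"] X_carrier assms(1)
  unfolding theta_def Let_def proj_incr_def[symmetric] by simp

text \<open>\<open>tr(D \<Omega>) = tr(D \<Omega> D)\<close> for a symmetric idempotent \<open>D\<close>; the right-hand side is
  \<open>E \<parallel>D \<epsilon>\<parallel>\<^sup>2\<close>.\<close>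
lemma mtrace_proj_incr_mult:
  assumes k: "k \<in> {1..q}" and Om: "Om \<in> carrier_mat n n"
    and Om_sym: "\<And>i j. i < n \<Longrightarrow> j < n \<Longrightarrow> Om $$ (i,j) = Om $$ (j,i)"
  shows "mtrace (proj_incr X nu k * Om)
    = (\<Sum>i<n. \<Sum>j<n. \<Sum>l<n. proj_incr X nu k $$ (i,j) * proj_incr X nu k $$ (i,l) * Om $$ (j,l))"
proof -
  let ?d = "\<lambda>i j. proj_incr X nu k $$ (i,j)"
  have Dk: "proj_incr X nu k \<in> carrier_mat n n" using k proj_incr_carrier by simp
  have "mtrace (proj_incr X nu k * Om) = (\<Sum>j<n. \<Sum>l<n. ?d j l * Om $$ (l,j))"
    unfolding mtrace_def using Dk Om by (simp add: scalar_prod_def atLeast0LessThan)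
  also have "\<dots> = (\<Sum>j<n. \<Sum>l<n. (\<Sum>i<n. ?d i j * ?d i l) * Om $$ (j,l))"
  proof (intro sum.cong refl)
    fix j l assume "j \<in> {..<n}" "l \<in> {..<n}"
    hence j: "j < n" and l: "l < n" by auto
    have "(\<Sum>i<n. ?d i j * ?d i l) = (\<Sum>i<n. ?d j i * ?d i l)"
      using k j by (intro sum.cong refl) (simp add: proj_incr_entry_symmetric)
    also have "\<dots> = ?d j l" using proj_incr_entry_idem[OF k j l] .
    finally show "?d j l * Om $$ (l,j) = (\<Sum>i<n. ?d i j * ?d i l) * Om $$ (j,l)"
      using Om_sym[OF j l] by simp
  qed
  also have "\<dots> = (\<Sum>j<n. \<Sum>i<n. \<Sum>l<n. ?d i j * ?d i l * Om $$ (j,l))"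
    by (simp add: sum_distrib_right) (intro sum.cong refl sum.swap)
  also have "\<dots> = (\<Sum>i<n. \<Sum>j<n. \<Sum>l<n. ?d i j * ?d i l * Om $$ (j,l))"
    by (rule sum.swap)
  finally show ?thesis .
qed

end


section \<open>The risk as a sum over layers\<close>

locale centered_noise =
  fixes M :: "'a measure" and eps :: "'a \<Rightarrow> real vec" and n :: nat and Om :: "real mat"
  assumes prob: "prob_space M"
    and eps_carrier: "\<forall>\<omega>\<in>space M. eps \<omega> \<in> carrier_vec n"
    and eps_moments: "\<forall>i<n. (\<lambda>\<omega>. eps \<omega> $ i) \<in> borel_measurable M
        \<and> integrable M (\<lambda>\<omega>. (eps \<omega> $ i)\<^sup>2) \<and> integral\<^sup>L M (\<lambda>\<omega>. eps \<omega> $ i) = 0"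
    and Om_carrier: "Om \<in> carrier_mat n n"
    and eps_cov: "\<forall>i<n. \<forall>j<n. integral\<^sup>L M (\<lambda>\<omega>. eps \<omega> $ i * eps \<omega> $ j) = Om $$ (i,j)"
begin

lemma cov_symmetric: "i < n \<Longrightarrow> j < n \<Longrightarrow> Om $$ (i,j) = Om $$ (j,i)"
  using eps_cov[rule_format, of i j] eps_cov[rule_format, of j i] by (simp add: mult.commute)

lemma noise_form_moments:
  shows "integrable M (\<lambda>\<omega>. \<Sum>j<n. c j * eps \<omega> $ j)"
    and "integral\<^sup>L M (\<lambda>\<omega>. \<Sum>j<n. c j * eps \<omega> $ j) = 0"
    and "integrable M (\<lambda>\<omega>. (\<Sum>j<n. c j * eps \<omega> $ j)\<^sup>2)"
    and "integral\<^sup>L M (\<lambda>\<omega>. (\<Sum>j<n. c j * eps \<omega> $ j)\<^sup>2) = (\<Sum>j<n. \<Sum>l<n. c j * c l * Om $$ (j,l))"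
  using linear_form_moments[OF prob, of n "\<lambda>\<omega> j. eps \<omega> $ j" "\<lambda>j l. Om $$ (j,l)" c]
    eps_moments eps_cov by auto

lemma affine_noise_sq_moment:
  fixes u :: "nat \<Rightarrow> real" and d :: "nat \<Rightarrow> nat \<Rightarrow> real"
  shows "integrable M (\<lambda>\<omega>. \<Sum>i<n. (u i + c * (\<Sum>j<n. d i j * eps \<omega> $ j))\<^sup>2)"
    and "integral\<^sup>L M (\<lambda>\<omega>. \<Sum>i<n. (u i + c * (\<Sum>j<n. d i j * eps \<omega> $ j))\<^sup>2)
      = (\<Sum>i<n. (u i)\<^sup>2) + c\<^sup>2 * (\<Sum>i<n. \<Sum>j<n. \<Sum>l<n. d i j * d i l * Om $$ (j,l))"
proof -
  interpret prob_space M by (rule prob)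
  define v where "v i \<omega> = (\<Sum>j<n. d i j * eps \<omega> $ j)" for i \<omega>
  have expand: "(\<Sum>i<n. (u i + c * v i \<omega>)\<^sup>2)
      = (\<Sum>i<n. (u i)\<^sup>2) + c\<^sup>2 * (\<Sum>i<n. (v i \<omega>)\<^sup>2) + 2 * c * (\<Sum>i<n. u i * v i \<omega>)" for \<omega>
    by (simp add: power2_eq_square algebra_simps sum.distrib sum_distrib_left)
  have int: "integrable M (v i)" "integrable M (\<lambda>\<omega>. (v i \<omega>)\<^sup>2)" for i
    unfolding v_def using noise_form_moments by auto
  have E: "integral\<^sup>L M (v i) = 0"
    "integral\<^sup>L M (\<lambda>\<omega>. (v i \<omega>)\<^sup>2) = (\<Sum>j<n. \<Sum>l<n. d i j * d i l * Om $$ (j,l))" for i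
    unfolding v_def using noise_form_moments by auto
  show "integrable M (\<lambda>\<omega>. \<Sum>i<n. (u i + c * (\<Sum>j<n. d i j * eps \<omega> $ j))\<^sup>2)"
    unfolding v_def[symmetric] expand using int by auto
  show "integral\<^sup>L M (\<lambda>\<omega>. \<Sum>i<n. (u i + c * (\<Sum>j<n. d i j * eps \<omega> $ j))\<^sup>2)
      = (\<Sum>i<n. (u i)\<^sup>2) + c\<^sup>2 * (\<Sum>i<n. \<Sum>j<n. \<Sum>l<n. d i j * d i l * Om $$ (j,l))"
    unfolding v_def[symmetric] expand using int E
    by (simp add: Bochner_Integration.integral_sum integral_add prob_space)
qed

lemma noise_quadratic_nonneg: "0 \<le> (\<Sum>i<n. \<Sum>j<n. \<Sum>l<n. d i j * d i l * Om $$ (j,l))"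
proof -
  have "0 \<le> integral\<^sup>L M (\<lambda>\<omega>. \<Sum>i<n. (0 + 1 * (\<Sum>j<n. d i j * eps \<omega> $ j))\<^sup>2)"
    by (intro integral_nonneg_AE AE_I2 sum_nonneg) simp
  thus ?thesis unfolding affine_noise_sq_moment(2) by simp
qed

end


locale nested_regression = nested_design X n p q nu + centered_noise M eps n Om
  for X :: "real mat" and n p q :: nat and nu :: "nat \<Rightarrow> nat"
    and M :: "'a measure" and eps :: "'a \<Rightarrow> real vec" and Om :: "real mat" +
  fixes beta :: "real vec"
  assumes beta_carrier: "beta \<in> carrier_vec p"
begin

lemma mean_carrier: "X *\<^sub>v beta \<in> carrier_vec n"
  using X_carrier beta_carrier by simp

lemma avg_mat_entry:
  "i < n \<Longrightarrow> j < n \<Longrightarrow> avg_mat X nu Mn w $$ (i,j) = (\<Sum>m=1..Mn. w m * proj X nu m $$ (i,j))"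
  unfolding avg_mat_def by simp

lemma averaged_error_sq_layers:
  assumes Mn: "Mn \<le> q" and e: "e \<in> carrier_vec n"
  shows "sqnorm (avg_mat X nu Mn w *\<^sub>v (X *\<^sub>v beta + e) - X *\<^sub>v beta)
    = (\<Sum>k=1..q. \<Sum>i<n. (((\<Sum>m=k..Mn. w m) - 1) * (\<Sum>j<n. proj_incr X nu k $$ (i,j) * (X *\<^sub>v beta) $ j)
        + (\<Sum>m=k..Mn. w m) * (\<Sum>j<n. proj_incr X nu k $$ (i,j) * e $ j))\<^sup>2)"
proof -
  let ?mu = "X *\<^sub>v beta" and ?P = "\<lambda>k i j. proj X nu k $$ (i,j)"
  have A: "avg_mat X nu Mn w \<in> carrier_mat n n" unfolding avg_mat_def by simp
  have "sqnorm (avg_mat X nu Mn w *\<^sub>v (?mu + e) - ?mu)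
      = (\<Sum>i<n. ((\<Sum>j<n. (\<Sum>m=1..Mn. w m * ?P m i j) * (?mu $ j + e $ j)) - ?mu $ i)\<^sup>2)"
    unfolding sqnorm_def using A mean_carrier e
    by (intro sum.cong) (auto simp del: index_mult_mat_vec simp: mult_mat_vec_entry avg_mat_entry)
  also have "\<dots> = (\<Sum>k=1..q. \<Sum>i<n. (\<Sum>j<n. (?P k i j - ?P (k - 1) i j)
      * ((\<Sum>m=k..Mn. w m) * (?mu $ j + e $ j) - ?mu $ j))\<^sup>2)"
    by (rule averaged_error_layers[OF proj_entry_0 proj_entry_symmetric proj_entry_mult
          proj_top_fixes_mean[OF beta_carrier] Mn])
  also have "\<dots> = (\<Sum>k=1..q. \<Sum>i<n. (((\<Sum>m=k..Mn. w m) - 1) * (\<Sum>j<n. proj_incr X nu k $$ (i,j) * ?mu $ j)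
        + (\<Sum>m=k..Mn. w m) * (\<Sum>j<n. proj_incr X nu k $$ (i,j) * e $ j))\<^sup>2)"
  proof (intro sum.cong refl arg_cong[where f="\<lambda>x. x\<^sup>2"])
    fix k i assume k: "k \<in> {1..q}" and "i \<in> {..<n}"
    hence i: "i < n" by simp
    have lin: "(\<Sum>j<n. c j * (W * (a j + b j) - a j))
        = (W - 1) * (\<Sum>j<n. c j * a j) + W * (\<Sum>j<n. c j * b j)" for c a b :: "nat \<Rightarrow> real" and W
      by (simp add: sum_distrib_left sum.distrib[symmetric] algebra_simps)
    have "(\<Sum>j<n. (?P k i j - ?P (k - 1) i j) * ((\<Sum>m=k..Mn. w m) * (?mu $ j + e $ j) - ?mu $ j))
        = (\<Sum>j<n. proj_incr X nu k $$ (i,j) * ((\<Sum>m=k..Mn. w m) * (?mu $ j + e $ j) - ?mu $ j))"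
      using k i by (intro sum.cong refl) (simp add: proj_incr_entry)
    thus "(\<Sum>j<n. (?P k i j - ?P (k - 1) i j) * ((\<Sum>m=k..Mn. w m) * (?mu $ j + e $ j) - ?mu $ j))
        = ((\<Sum>m=k..Mn. w m) - 1) * (\<Sum>j<n. proj_incr X nu k $$ (i,j) * ?mu $ j)
          + (\<Sum>m=k..Mn. w m) * (\<Sum>j<n. proj_incr X nu k $$ (i,j) * e $ j)"
      by (simp only: lin)
  qed
  finally show ?thesis .
qed

lemma risk_w_layers:
  assumes Mn: "Mn \<le> q"
  shows "risk_w M eps X beta nu Mn w = (\<Sum>k=1..q. layer_risk (sqnorm (proj_incr X nu k *\<^sub>v (X *\<^sub>v beta)))
      (mtrace (proj_incr X nu k * Om)) (\<Sum>m=k..Mn. w m))"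
proof -
  let ?d = "\<lambda>k i j. proj_incr X nu k $$ (i,j)" and ?W = "\<lambda>k. \<Sum>m=k..Mn. w m"
  let ?u = "\<lambda>k i. (?W k - 1) * (\<Sum>j<n. ?d k i j * (X *\<^sub>v beta) $ j)"
  let ?layer = "\<lambda>k \<omega>. \<Sum>i<n. (?u k i + ?W k * (\<Sum>j<n. ?d k i j * eps \<omega> $ j))\<^sup>2"
  have "risk_w M eps X beta nu Mn w = integral\<^sup>L M (\<lambda>\<omega>. \<Sum>k=1..q. ?layer k \<omega>)"
    unfolding risk_w_def risk_mat_def using averaged_error_sq_layers[OF Mn] eps_carrier
    by (intro Bochner_Integration.integral_cong) auto
  also have "\<dots> = (\<Sum>k=1..q. integral\<^sup>L M (?layer k))"
    using affine_noise_sq_moment(1) by (intro Bochner_Integration.integral_sum)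
  also have "\<dots> = (\<Sum>k=1..q. layer_risk (sqnorm (proj_incr X nu k *\<^sub>v (X *\<^sub>v beta)))
      (mtrace (proj_incr X nu k * Om)) (?W k))"
  proof (intro sum.cong refl)
    fix k assume k: "k \<in> {1..q}"
    have "(\<Sum>i<n. (?u k i)\<^sup>2) = (?W k - 1)\<^sup>2 * (\<Sum>i<n. (\<Sum>j<n. ?d k i j * (X *\<^sub>v beta) $ j)\<^sup>2)"
      by (simp only: power_mult_distrib flip: sum_distrib_left)
    also have "\<dots> = (?W k - 1)\<^sup>2 * sqnorm (proj_incr X nu k *\<^sub>v (X *\<^sub>v beta))"
      using sqnorm_mult_mat_vec[OF proj_incr_carrier mean_carrier] k by simp
    finally have bias: "(\<Sum>i<n. (?u k i)\<^sup>2) = \<dots>" .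
    show "integral\<^sup>L M (?layer k) = layer_risk (sqnorm (proj_incr X nu k *\<^sub>v (X *\<^sub>v beta)))
        (mtrace (proj_incr X nu k * Om)) (?W k)"
      unfolding affine_noise_sq_moment(2) layer_risk_def
      using bias mtrace_proj_incr_mult[OF k Om_carrier cov_symmetric] by simp
  qed
  finally show ?thesis .
qed

end

lemma ratio_le_of_theta_ge:
  fixes a b thbar :: real
  assumes theta: "thbar \<le> (a / real n) / b" and thbar: "0 < thbar" and b: "0 \<le> b"
  shows "0 < a" and "0 < b" and "b / a \<le> (1 / thbar) / real n"
proof -
  have le: "thbar \<le> a / (real n * b)" using theta by simp
  hence "real n * b \<noteq> 0" using thbar by (metis division_ring_divide_zero not_le)
  hence nb: "0 < real n * b" using b by simp
  hence a: "thbar * (real n * b) \<le> a" using le by (simp add: pos_le_divide_eq)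
  show "0 < b" using nb b by (auto simp: zero_less_mult_iff)
  have "0 < real n" using nb b by (auto simp: zero_less_mult_iff)
  show "0 < a" using a nb thbar by (smt (verit) mult_pos_pos)
  thus "b / a \<le> (1 / thbar) / real n"
    using a \<open>0 < real n\<close> thbar by (simp add: field_simps)
qed

lemma (in nested_regression) risk_gap_le:
  assumes Mn: "1 \<le> Mn" "Mn \<le> q"
    and ws: "unique_argmin Mn (risk_w M eps X beta nu Mn) (simplex_w Mn) ws"
    and wt: "unique_argmin Mn (risk_w M eps X beta nu Mn) (cube_w Mn) wt"
    and theta: "thbar \<le> theta X beta Om nu 1" and thbar: "0 < thbar"
  shows "\<bar>risk_w M eps X beta nu Mn ws - risk_w M eps X beta nu Mn wt\<bar>
    \<le> (1 / thbar) / real n * \<bar>risk_w M eps X beta nu Mn ws\<bar>"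
proof -
  define R where "R = risk_w M eps X beta nu Mn"
  define a where "a k = sqnorm (proj_incr X nu k *\<^sub>v (X *\<^sub>v beta))" for k
  define b where "b k = mtrace (proj_incr X nu k * Om)" for k
  have a_nonneg: "0 \<le> a k" for k unfolding a_def sqnorm_def by (simp add: sum_nonneg)
  have b_nonneg: "0 \<le> b k" if "k \<in> {1..q}" for k
    using mtrace_proj_incr_mult[OF that Om_carrier cov_symmetric] noise_quadratic_nonneg
    unfolding b_def by simp
  have "1 \<in> {1..q}" using Mn by simp
  hence "theta X beta Om nu 1 = (a 1 / real n) / b 1"
    unfolding a_def b_def by (rule theta_eq[OF beta_carrier])
  with theta have "thbar \<le> (a 1 / real n) / b 1" by simp
  note ratio = ratio_le_of_theta_ge[OF this thbar b_nonneg[OF \<open>1 \<in> {1..q}\<close>]]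
  have R: "R w = (\<Sum>k=1..q. layer_risk (a k) (b k) (\<Sum>m=k..Mn. w m))" for w
    unfolding R_def a_def b_def using risk_w_layers[OF Mn(2)] .
  have "ws \<in> simplex_w Mn" "\<forall>v\<in>simplex_w Mn. R ws \<le> R v"
    and "wt \<in> cube_w Mn" "\<forall>v\<in>cube_w Mn. R wt \<le> R v"
    using ws wt unfolding unique_argmin_def R_def by blast+
  note gap = simplex_cube_risk_gap[OF R a_nonneg b_nonneg ratio(1) Mn this]
  have "\<bar>R ws - R wt\<bar> \<le> (b 1 / a 1) * b 1" using gap by (simp add: power2_eq_square)
  also have "\<dots> \<le> (b 1 / a 1) * \<bar>R ws\<bar>"
    using gap ratio by (intro mult_left_mono) auto
  also have "\<dots> \<le> (1 / thbar) / real n * \<bar>R ws\<bar>"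
    using ratio(3) by (rule mult_right_mono) simp
  finally show ?thesis unfolding R_def .
qed

lemma smallo_if_le_const_over_n:
  fixes f g :: "nat \<Rightarrow> real"
  assumes "\<forall>\<^sub>F n in sequentially. \<bar>f n\<bar> \<le> C / real n * \<bar>g n\<bar>"
  shows "f \<in> o(g)"
proof (rule landau_o.smallI)
  fix c :: real assume "0 < c"
  hence "\<forall>\<^sub>F n in sequentially. C / real n < c"
    using order_tendstoD(2)[OF lim_const_over_n[of C]] by simp
  with assms show "\<forall>\<^sub>F n in sequentially. norm (f n) \<le> c * norm (g n)"
  proof eventually_elim
    case (elim n)
    thus ?case by (smt (verit) abs_ge_zero mult_right_mono real_norm_def)
  qed
qed

theorem theorem5:
  fixes M :: "nat \<Rightarrow> 'a measure"
    and eps :: "nat \<Rightarrow> 'a \<Rightarrow> real vec"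
    and X :: "nat \<Rightarrow> real mat" and beta :: "nat \<Rightarrow> real vec" and Om :: "nat \<Rightarrow> real mat"
    and p q Mn :: "nat \<Rightarrow> nat" and nu :: "nat \<Rightarrow> nat \<Rightarrow> nat"
    and wstar wtil :: "nat \<Rightarrow> nat \<Rightarrow> real"
  assumes setting: "\<forall>\<^sub>F n in sequentially.
      X n \<in> carrier_mat n (p n) \<and> p n < n \<and> beta n \<in> carrier_vec (p n)
    \<and> nu n 0 = 0 \<and> (\<forall>m<q n. nu n m < nu n (Suc m)) \<and> nu n (q n) = p n
    \<and> (\<forall>m\<in>{1..q n}. full_col_rank (first_cols (X n) (nu n m)))
    \<and> 2 \<le> Mn n \<and> Mn n \<le> q n
    \<and> prob_space (M n)
    \<and> (\<forall>\<omega>\<in>space (M n). eps n \<omega> \<in> carrier_vec n)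
    \<and> (\<forall>i<n. (\<lambda>\<omega>. eps n \<omega> $ i) \<in> borel_measurable (M n)
            \<and> integrable (M n) (\<lambda>\<omega>. (eps n \<omega> $ i)\<^sup>2)
            \<and> integral\<^sup>L (M n) (\<lambda>\<omega>. eps n \<omega> $ i) = 0)
    \<and> Om n \<in> carrier_mat n n
    \<and> (\<forall>i<n. \<forall>j<n. integral\<^sup>L (M n) (\<lambda>\<omega>. eps n \<omega> $ i * eps n \<omega> $ j) = Om n $$ (i,j))
    \<and> (\<forall>x\<in>carrier_vec n. x \<noteq> 0\<^sub>v n \<longrightarrow> scalar_prod x (Om n *\<^sub>v x) > 0)
    \<and> unique_argmin (Mn n) (risk_w (M n) (eps n) (X n) (beta n) (nu n) (Mn n))
        (simplex_w (Mn n)) (wstar n)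
    \<and> unique_argmin (Mn n) (risk_w (M n) (eps n) (X n) (beta n) (nu n) (Mn n))
        (cube_w (Mn n)) (wtil n)
    \<and> (\<exists>!m. m \<in> {1..q n} \<and>
          (\<forall>k\<in>{1..q n}. risk_m (M n) (eps n) (X n) (beta n) (nu n) m
                        \<le> risk_m (M n) (eps n) (X n) (beta n) (nu n) k))"
  and A1: "(\<lambda>n. sqnorm (X n *\<^sub>v beta n) / real n) \<in> O(\<lambda>n. 1)"
  and A2: "\<exists>c1 c2::real. 0 < c1 \<and> c1 \<le> c2 \<and>
      (\<forall>\<^sub>F n in sequentially. \<forall>k. eigenvalue (Om n) k \<longrightarrow> c1 < k \<and> k < c2)"
  and A3: "\<forall>\<^sub>F n in sequentially. \<forall>m. 1 \<le> m \<and> m < q n \<longrightarrow>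
      theta (X n) (beta n) (Om n) (nu n) (Suc m) \<le> theta (X n) (beta n) (Om n) (nu n) m"
  and A4: "\<exists>V::nat. 1 \<le> V \<and> (\<forall>\<^sub>F n in sequentially.
      \<forall>m\<in>{1..dn (X n) (beta n) (Om n) (nu n) (q n)}. nu n m - nu n (m - 1) \<le> V)"
  and A5: "\<forall>m::nat. 1 \<le> m \<longrightarrow> (\<exists>thbar>0. \<exists>K. \<forall>n\<ge>K.
      m \<le> dn (X n) (beta n) (Om n) (nu n) (q n) \<and> theta (X n) (beta n) (Om n) (nu n) m \<ge> thbar)"
  and A6: "\<forall>\<^sub>F n in sequentially. \<exists>m'. 1 \<le> m' \<and> m' \<le> dn (X n) (beta n) (Om n) (nu n) (q n) - 1
      \<and> (\<forall>m. 2 \<le> m \<and> m \<le> m' \<longrightarrow>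
            risk_m (M n) (eps n) (X n) (beta n) (nu n) m
              < risk_m (M n) (eps n) (X n) (beta n) (nu n) (m - 1))
      \<and> (\<forall>m. m' < m \<and> m \<le> dn (X n) (beta n) (Om n) (nu n) (q n) \<longrightarrow>
            risk_m (M n) (eps n) (X n) (beta n) (nu n) m
              \<ge> risk_m (M n) (eps n) (X n) (beta n) (nu n) (m - 1))
      \<and> risk_m (M n) (eps n) (X n) (beta n) (nu n) (dn (X n) (beta n) (Om n) (nu n) (q n))
          > risk_m (M n) (eps n) (X n) (beta n) (nu n) (dn (X n) (beta n) (Om n) (nu n) (q n) - 1)"
  shows "(\<lambda>n. risk_w (M n) (eps n) (X n) (beta n) (nu n) (Mn n) (wstar n)
              - risk_w (M n) (eps n) (X n) (beta n) (nu n) (Mn n) (wtil n))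
         \<in> o(\<lambda>n. risk_w (M n) (eps n) (X n) (beta n) (nu n) (Mn n) (wstar n))"
proof -
  obtain thbar K where thbar: "0 < thbar"
    and theta_1: "\<And>n. K \<le> n \<Longrightarrow> thbar \<le> theta (X n) (beta n) (Om n) (nu n) 1"
    using A5[rule_format, of 1] by auto
  have "\<forall>\<^sub>F n in sequentially.
      \<bar>risk_w (M n) (eps n) (X n) (beta n) (nu n) (Mn n) (wstar n)
        - risk_w (M n) (eps n) (X n) (beta n) (nu n) (Mn n) (wtil n)\<bar>
      \<le> (1 / thbar) / real n * \<bar>risk_w (M n) (eps n) (X n) (beta n) (nu n) (Mn n) (wstar n)\<bar>"
    using setting eventually_ge_at_top[of K]
  proof eventually_elim
    case (elim n)
    hence "nested_regression (X n) n (p n) (q n) (nu n) (M n) (eps n) (Om n) (beta n)"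
      unfolding nested_regression_def nested_regression_axioms_def nested_design_def
        centered_noise_def by blast
    moreover from elim have "1 \<le> Mn n" "Mn n \<le> q n" by auto
    ultimately show ?case
      using elim theta_1[of n] thbar by (blast intro: nested_regression.risk_gap_le)
  qed
  thus ?thesis by (rule smallo_if_le_const_over_n)
qed

end
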